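(* Let $f_1,f_2$ be strongly hyperbolic functions, $a_1,a_2>0$, $b_1,b_2,c_1,c_2\in\mathbb{R}$ with $(a_1,b_1,c_1)\neq(a_2,b_2,c_2)$, and let $D_1=\overline{f_{a_1,b_1,c_1}}$, $D_2=\overline{f_{a_2,b_2,c_2}}$. If one of the following holds, then $D_1\cap D_2=\{p\}$: (1) $p=(b,\infty)$, $a_1=a_2$, $b_1=b_2=-b$ and $c_1\neq c_2$; (2) $p=(\infty,c)$, $a_1=a_2$, $b_1\neq b_2$ and $c_1=c_2=c$; (3) $p=(x_p,y_p)\in\mathbb{R}^2$, $f_{a_1,b_1,c_1}(x_p)=f_{a_2,b_2,c_2}(x_p)=y_p$ and $f'_{a_1,b_1,c_1}(x_p)=f'_{a_2,b_2,c_2}(x_p)$.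
   Context: Identify $\mathbb{S}^1$ with $\mathbb{R}\cup\{\infty\}$, $\mathcal{P}=\mathbb{S}^1\times\mathbb{S}^1$, $\mathbb{R}^+=(0,\infty)$. A function $f:\mathbb{R}^+\to\mathbb{R}^+$ is strongly hyperbolic if: (1) $\lim_{x\to0+}f(x)=+\infty$, $\lim_{x\to+\infty}f(x)=0$; (2) $f$ strictly convex; (3) $\lim_{x\to+\infty}f(x+b)/f(x)=1$ for each $b\in\mathbb{R}$; (4) $f$ differentiable; (5) $\ln|f'|$ strictly convex. For $a>0$, $b,c\in\mathbb{R}$: $f_{a,b,c}:\mathbb{R}\setminus\{-b\}\to\mathbb{R}$, $f_{a,b,c}(x)=af_1(x+b)+c$ for $x>-b$, $f_{a,b,c}(x)=-af_2(-x-b)+c$ for $x<-b$; $\overline{f_{a,b,c}}=\{(x,f_{a,b,c}(x)):x\ne-b\}\cup\{(-b,\infty),(\infty,c)\}\subset\mathcal{P}$. *)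

theory Defs
  imports "HOL-Analysis.Analysis"
begin

text \<open>The circle S^1 identified with the real line plus a point at infinity.\<close>
datatype circ = Fin real | Infty

definition strictly_convex_on :: "real set \<Rightarrow> (real \<Rightarrow> real) \<Rightarrow> bool" where
  "strictly_convex_on S g \<longleftrightarrow>
     (\<forall>x\<in>S. \<forall>y\<in>S. \<forall>t::real. x \<noteq> y \<and> 0 < t \<and> t < 1 \<longrightarrow>
        g ((1 - t) * x + t * y) < (1 - t) * g x + t * g y)"

text \<open>Strongly hyperbolic functions R+ -> R+ (only values on (0,oo) matter).\<close>
definition strongly_hyperbolic :: "(real \<Rightarrow> real) \<Rightarrow> bool" where
  "strongly_hyperbolic f \<longleftrightarrow>
     (\<forall>x>0. f x > 0) \<and>
     filterlim f at_top (at_right 0) \<and>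
     (f \<longlongrightarrow> 0) at_top \<and>
     strictly_convex_on {0<..} f \<and>
     (\<forall>b::real. ((\<lambda>x. f (x + b) / f x) \<longlongrightarrow> 1) at_top) \<and>
     (\<forall>x>0. f differentiable (at x)) \<and>
     strictly_convex_on {0<..} (\<lambda>x. ln \<bar>deriv f x\<bar>)"

text \<open>f_{a,b,c}, defined on R minus {-b} (value at -b is irrelevant; set to 0).\<close>
definition fabc :: "(real \<Rightarrow> real) \<Rightarrow> (real \<Rightarrow> real) \<Rightarrow> real \<Rightarrow> real \<Rightarrow> real \<Rightarrow> real \<Rightarrow> real" where
  "fabc f1 f2 a b c x =
     (if x > -b then a * f1 (x + b) + c
      else if x < -b then - a * f2 (- x - b) + c
      else 0)"

definition graph_closure :: "(real \<Rightarrow> real) \<Rightarrow> (real \<Rightarrow> real) \<Rightarrow> real \<Rightarrow> real \<Rightarrow> real \<Rightarrow> (circ \<times> circ) set" where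
  "graph_closure f1 f2 a b c =
     {(Fin x, Fin (fabc f1 f2 a b c x)) | x. x \<noteq> -b} \<union> {(Fin (-b), Infty), (Infty, Fin c)}"

end

theory Submission
  imports Defs
begin

text \<open>
  Each branch of f_{a,b,c} is strictly decreasing, and the two branches lie on opposite sides of
  the asymptote y = c; hence vertical or horizontal translates never meet at a finite point, which
  settles cases (1) and (2).

  In case (3) the poles differ. Exchanging the graphs and reflecting in the origin (which swaps
  f1 and f2), we may assume b1 < b2 and xp > -b2. If xp lies on both right branches,
  log-convexity of |f1'| makes a1 f1(u) - a2 f1(u + b2 - b1) strictly decrease and then strictly
  increase around the point of tangency; as it tends to 0 at infinity, c1 > c2, and the graphs
  meet nowhere else. If xp lies between the poles, the difference of the two graphs has a
  strictly increasing derivative there, while outside that interval the graphs are separated by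
  the common value at xp.
\<close>

lemma strictly_convex_on_chord:
  assumes "strictly_convex_on S g" "u \<in> S" "v \<in> S" "u < x" "x < v"
  shows "(v - u) * g x < (v - x) * g u + (x - u) * g v"
proof -
  define t where "t = (x - u) / (v - u)"
  have t: "0 < t" "t < 1" "(v - u) * t = x - u" "(v - u) * (1 - t) = v - x"
    using assms(4,5) by (auto simp: t_def field_simps)
  then have x: "(1 - t) * u + t * v = x"
    by (simp add: algebra_simps)
  have "g ((1 - t) * u + t * v) < (1 - t) * g u + t * g v"
    using assms(1-3) t(1,2) \<open>u < x\<close> \<open>x < v\<close> unfolding strictly_convex_on_def by force
  then have "(v - u) * g x < (v - u) * ((1 - t) * g u + t * g v)"
    using assms(4,5) x by simp
  also have "\<dots> = (v - x) * g u + (x - u) * g v"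
    using t(3,4) by (metis distrib_left mult.assoc)
  finally show ?thesis .
qed

lemma strictly_convex_on_increments:
  assumes "strictly_convex_on S g" "u \<in> S" "w + d \<in> S" "u < w" "0 < d"
  shows "g w + g (u + d) < g u + g (w + d)"
proof -
  have "(w + d - u) * g w < d * g u + (w - u) * g (w + d)"
    using strictly_convex_on_chord[OF assms(1-3), of w] assms(4,5) by simp
  moreover have "(w + d - u) * g (u + d) < (w - u) * g u + d * g (w + d)"
    using strictly_convex_on_chord[OF assms(1-3), of "u + d"] assms(4,5) by simp
  ultimately have "(w + d - u) * (g w + g (u + d)) < (w + d - u) * (g u + g (w + d))"
    by (simp add: algebra_simps)
  then show ?thesis
    using assms(4,5) by simp
qed

lemma DERIV_sign_change_imp_strict_min:
  fixes H H' :: "real \<Rightarrow> real"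
  assumes "x \<noteq> x0"
    and deriv: "\<And>y. min x x0 \<le> y \<Longrightarrow> y \<le> max x x0 \<Longrightarrow> (H has_real_derivative H' y) (at y)"
    and neg: "\<And>y. min x x0 < y \<Longrightarrow> y < x0 \<Longrightarrow> H' y < 0"
    and pos: "\<And>y. x0 < y \<Longrightarrow> y < max x x0 \<Longrightarrow> 0 < H' y"
  shows "H x0 < H x"
proof -
  have cont: "continuous_on {min x x0..max x x0} H"
    using deriv by (intro DERIV_atLeastAtMost_imp_continuous_on) blast
  show ?thesis
  proof (cases "x < x0")
    case True
    show ?thesis
    proof (rule DERIV_neg_imp_decreasing_open[OF True])
      show "\<exists>z. (H has_real_derivative z) (at y) \<and> z < 0" if "x < y" "y < x0" for y
        using deriv[of y] neg[of y] that by auto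
    qed (use cont True in \<open>simp add: min_def max_def\<close>)
  next
    case False
    then have "x0 < x"
      using \<open>x \<noteq> x0\<close> by simp
    then show ?thesis
    proof (rule DERIV_pos_imp_increasing_open)
      show "\<exists>z. (H has_real_derivative z) (at y) \<and> 0 < z" if "x0 < y" "y < x" for y
        using deriv[of y] pos[of y] that by auto
    qed (use cont \<open>x0 < x\<close> in \<open>simp add: min_def max_def\<close>)
  qed
qed

lemma strongly_hyperbolic_pos: "strongly_hyperbolic f \<Longrightarrow> 0 < x \<Longrightarrow> 0 < f x"
  unfolding strongly_hyperbolic_def by auto

lemma strongly_hyperbolic_has_deriv:
  "strongly_hyperbolic f \<Longrightarrow> 0 < x \<Longrightarrow> (f has_real_derivative deriv f x) (at x)"
  unfolding strongly_hyperbolic_def using DERIV_deriv_iff_real_differentiable by blast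

lemma strongly_hyperbolic_above_tangent:
  assumes "strongly_hyperbolic f" "0 < x" "0 < z"
  shows "deriv f x * (z - x) \<le> f z - f x"
proof (rule convex_on_imp_above_tangent[where A = "{0<..}"])
  have "strictly_convex_on {0<..} f"
    using assms(1) unfolding strongly_hyperbolic_def by blast
  then show "convex_on {0<..} f"
    by (intro convex_on_linorderI) (auto simp: strictly_convex_on_def intro: less_imp_le)
  show "(f has_field_derivative deriv f x) (at x within {0<..})"
    using strongly_hyperbolic_has_deriv[OF assms(1,2)] by (rule DERIV_subset) auto
qed (use assms in \<open>auto simp: interior_open\<close>)

lemma strongly_hyperbolic_deriv_neg:
  assumes sh: "strongly_hyperbolic f" and x: "0 < x"
  shows "deriv f x < 0"
proof (rule ccontr)
  assume "\<not> deriv f x < 0"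
  have "(f \<longlongrightarrow> 0) at_top" "0 < f x"
    using sh x unfolding strongly_hyperbolic_def by auto
  then obtain z where z: "x < z" "f z < f x"
    using eventually_conj[OF order_tendstoD(2) eventually_gt_at_top[of x]]
    by (metis (no_types, lifting) eventually_happens' trivial_limit_at_top_linorder)
  have "deriv f x * (z - x) \<le> f z - f x"
    using strongly_hyperbolic_above_tangent[OF sh x, of z] x z by simp
  moreover have "0 \<le> deriv f x * (z - x)"
    using \<open>\<not> deriv f x < 0\<close> z by simp
  ultimately show False
    using z by linarith
qed

lemma strongly_hyperbolic_strict_decreasing:
  assumes sh: "strongly_hyperbolic f" and "0 < x" "x < y"
  shows "f y < f x"
proof -
  have "deriv f y * (x - y) \<le> f x - f y"
    using strongly_hyperbolic_above_tangent[OF sh, of y x] assms by simp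
  moreover have "0 < deriv f y * (x - y)"
    using strongly_hyperbolic_deriv_neg[OF sh, of y] assms by (simp add: mult_neg_neg)
  ultimately show ?thesis
    by linarith
qed

lemma strongly_hyperbolic_deriv_strict_mono:
  assumes sh: "strongly_hyperbolic f" and "0 < x" "x < y"
  shows "deriv f x < deriv f y"
proof -
  define m where "m = (x + y) / 2"
  have m: "0 < m - x" "y - m = m - x" "0 < m"
    using assms by (auto simp: m_def field_simps)
  have "strictly_convex_on {0<..} f"
    using sh unfolding strongly_hyperbolic_def by blast
  then have "(y - x) * f m < (y - m) * f x + (m - x) * f y"
    using strictly_convex_on_chord[of "{0<..}" f x y m] assms m by simp
  moreover have "y - x = 2 * (m - x)"
    using m by simp
  ultimately have "(m - x) * (2 * f m) < (m - x) * (f x + f y)"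
    unfolding m(2) by (simp add: algebra_simps)
  then have "f m - f x < f y - f m"
    using m by simp
  moreover have "deriv f x * (m - x) \<le> f m - f x"
    using strongly_hyperbolic_above_tangent[OF sh, of x m] assms m by simp
  moreover have "f y - f m \<le> deriv f y * (m - x)"
    using strongly_hyperbolic_above_tangent[OF sh, of y m] assms m
    unfolding m(2)[symmetric] by (simp add: algebra_simps)
  ultimately have "deriv f x * (m - x) < deriv f y * (m - x)"
    by linarith
  then show ?thesis
    using m by simp
qed

text \<open>Log-convexity of |f'|: the ratio f'(x + d) / f'(x) is strictly increasing.\<close>

lemma strongly_hyperbolic_deriv_cross_ineq:
  assumes sh: "strongly_hyperbolic f" and "0 < u" "u < w" "0 < d"
  shows "deriv f w * deriv f (u + d) < deriv f u * deriv f (w + d)"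
proof -
  have "strictly_convex_on {0<..} (\<lambda>x. ln \<bar>deriv f x\<bar>)"
    using sh unfolding strongly_hyperbolic_def by blast
  from strictly_convex_on_increments[OF this, of u w d] assms
  have "ln \<bar>deriv f w\<bar> + ln \<bar>deriv f (u + d)\<bar> < ln \<bar>deriv f u\<bar> + ln \<bar>deriv f (w + d)\<bar>"
    by simp
  moreover have "deriv f w < 0" "deriv f (u + d) < 0" "deriv f u < 0" "deriv f (w + d) < 0"
    using strongly_hyperbolic_deriv_neg[OF sh] assms by auto
  moreover have "ln \<bar>a\<bar> + ln \<bar>b\<bar> = ln (a * b)" if "a < 0" "b < 0" for a b :: real
    using that ln_mult[of "- a" "- b"] by simp
  ultimately have "ln (deriv f w * deriv f (u + d)) < ln (deriv f u * deriv f (w + d))"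
    by metis
  then show ?thesis
    using \<open>deriv f w < 0\<close> \<open>deriv f (u + d) < 0\<close> \<open>deriv f u < 0\<close> \<open>deriv f (w + d) < 0\<close>
    by (simp add: mult_neg_neg)
qed

lemma has_real_derivative_shifted_difference:
  assumes sh: "strongly_hyperbolic f" and "0 < u" "0 < d"
  shows "((\<lambda>x. a1 * f x - a2 * f (x + d)) has_real_derivative
           a1 * deriv f u - a2 * deriv f (u + d)) (at u)"
proof -
  have "((\<lambda>x. f (x + d)) has_real_derivative deriv f (u + d) * 1) (at u)"
    using strongly_hyperbolic_has_deriv[OF sh, of "u + d"] assms
    by (intro DERIV_chain2[where g = "\<lambda>x. x + d"]) (auto intro!: derivative_eq_intros)
  then show ?thesis
    using strongly_hyperbolic_has_deriv[OF sh \<open>0 < u\<close>] by (auto intro!: derivative_eq_intros)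
qed

text \<open>
  With d = b2 - b1 > 0, the function a1 f u - a2 f (u + d) is, up to the constant c1 - c2, the
  difference of the right branches of f_{a1,b1,c1} and f_{a2,b2,c2} at x = u - b1, and the
  hypothesis tangent says that these branches are tangent at u0 - b1.
\<close>

context
  fixes f :: "real \<Rightarrow> real" and a1 a2 d u0 :: real
  assumes sh: "strongly_hyperbolic f" and a1: "0 < a1" and d: "0 < d" and u0: "0 < u0"
    and tangent: "a1 * deriv f u0 = a2 * deriv f (u0 + d)"
begin

lemma shifted_tangency_coeff_less: "a1 < a2"
proof (rule ccontr)
  assume "\<not> a1 < a2"
  have "a1 * deriv f u0 < a1 * deriv f (u0 + d)"
    using strongly_hyperbolic_deriv_strict_mono[OF sh u0, of "u0 + d"] a1 d by simp
  also have "\<dots> \<le> a2 * deriv f (u0 + d)"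
    using strongly_hyperbolic_deriv_neg[OF sh, of "u0 + d"] \<open>\<not> a1 < a2\<close> u0 d
    by (simp add: mult_right_mono_neg)
  finally show False
    using tangent by simp
qed

lemma shifted_tangency_deriv_sign:
  assumes "0 < u"
  shows "u < u0 \<Longrightarrow> a1 * deriv f u - a2 * deriv f (u + d) < 0"
    and "u0 < u \<Longrightarrow> 0 < a1 * deriv f u - a2 * deriv f (u + d)"
proof -
  have neg: "deriv f (u0 + d) < 0"
    using strongly_hyperbolic_deriv_neg[OF sh, of "u0 + d"] u0 d by simp
  show "a1 * deriv f u - a2 * deriv f (u + d) < 0" if "u < u0"
  proof -
    have "(a1 * deriv f u0) * deriv f (u + d) < (a1 * deriv f u) * deriv f (u0 + d)"
      using strongly_hyperbolic_deriv_cross_ineq[OF sh \<open>0 < u\<close> that d] a1 by (simp add: mult.assoc)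
    then have "deriv f (u0 + d) * (a2 * deriv f (u + d)) < deriv f (u0 + d) * (a1 * deriv f u)"
      unfolding tangent by (simp add: mult_ac)
    then show ?thesis
      using neg by (simp add: mult_less_cancel_left_neg)
  qed
  show "0 < a1 * deriv f u - a2 * deriv f (u + d)" if "u0 < u"
  proof -
    have "(a1 * deriv f u) * deriv f (u0 + d) < (a1 * deriv f u0) * deriv f (u + d)"
      using strongly_hyperbolic_deriv_cross_ineq[OF sh u0 that d] a1 by (simp add: mult.assoc)
    then have "deriv f (u0 + d) * (a1 * deriv f u) < deriv f (u0 + d) * (a2 * deriv f (u + d))"
      unfolding tangent by (simp add: mult_ac)
    then show ?thesis
      using neg by (simp add: mult_less_cancel_left_neg)
  qed
qed

lemma shifted_tangency_strict_min:
  assumes "0 < u" "u \<noteq> u0"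
  shows "a1 * f u0 - a2 * f (u0 + d) < a1 * f u - a2 * f (u + d)"
proof (rule DERIV_sign_change_imp_strict_min[OF assms(2)])
  fix y
  assume "min u u0 \<le> y"
  then show "((\<lambda>x. a1 * f x - a2 * f (x + d)) has_real_derivative
               a1 * deriv f y - a2 * deriv f (y + d)) (at y)"
    using has_real_derivative_shifted_difference[OF sh _ d] assms u0 by simp
qed (use shifted_tangency_deriv_sign assms u0 in auto)

lemma shifted_tangency_gap: "a1 * f u0 < a2 * f (u0 + d)"
proof -
  define G where "G x = - (a1 * f x - a2 * f (x + d))" for x
  have lim: "(f \<longlongrightarrow> 0) at_top"
    using sh unfolding strongly_hyperbolic_def by blast
  moreover have "filterlim (\<lambda>x. x + d) at_top at_top"
    using filterlim_tendsto_add_at_top[OF tendsto_const filterlim_ident, of d] by (simp add: add.commute)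
  ultimately have "((\<lambda>x. f (x + d)) \<longlongrightarrow> 0) at_top"
    by (rule filterlim_compose)
  then have "(G \<longlongrightarrow> - (a1 * 0 - a2 * 0)) at_top"
    unfolding G_def by (intro tendsto_minus tendsto_diff tendsto_mult tendsto_const lim)
  moreover have "\<exists>y. (G has_real_derivative y) (at x) \<and> y < 0" if "u0 + 1 \<le> x" for x
    using has_real_derivative_shifted_difference[OF sh, of x d a1 a2] d u0 that
      shifted_tangency_deriv_sign(2)[of x]
    unfolding G_def by (intro exI[of _ "- (a1 * deriv f x - a2 * deriv f (x + d))"] conjI DERIV_minus) auto
  ultimately have "0 < G (u0 + 1)"
    using DERIV_neg_imp_decreasing_at_top[of "u0 + 1" G 0] by simp
  moreover have "G (u0 + 1) < G u0"
    using shifted_tangency_strict_min[of "u0 + 1"] u0 unfolding G_def by simp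
  ultimately show ?thesis
    unfolding G_def by simp
qed

end

lemma fabc_right: "-b < x \<Longrightarrow> fabc f1 f2 a b c x = a * f1 (x + b) + c"
  by (simp add: fabc_def)

lemma fabc_left: "x < -b \<Longrightarrow> fabc f1 f2 a b c x = - a * f2 (- x - b) + c"
  by (simp add: fabc_def)

lemma fabc_shift: "fabc f1 f2 a b c x = fabc f1 f2 a b' c (x + b - b')"
proof -
  have "x + b - b' + b' = x + b" "- (x + b - b') - b' = - x - b"
    by simp_all
  then show ?thesis
    by (simp add: fabc_def)
qed

lemma fabc_add_const: "x \<noteq> -b \<Longrightarrow> fabc f1 f2 a b c' x = fabc f1 f2 a b c x + (c' - c)"
  by (simp add: fabc_def)

lemma fabc_reflect: "fabc f2 f1 a (- b) (- c) x = - fabc f1 f2 a b c (- x)"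
  by (simp add: fabc_def)

lemma fabc_has_deriv_right:
  assumes "strongly_hyperbolic f1" "-b < x"
  shows "(fabc f1 f2 a b c has_real_derivative a * deriv f1 (x + b)) (at x)"
proof -
  have "((\<lambda>y. f1 (y + b)) has_real_derivative deriv f1 (x + b) * 1) (at x)"
    using strongly_hyperbolic_has_deriv[OF assms(1), of "x + b"] assms(2)
    by (intro DERIV_chain2[where g = "\<lambda>y. y + b"]) (auto intro!: derivative_eq_intros)
  then have "((\<lambda>y. a * f1 (y + b) + c) has_real_derivative a * deriv f1 (x + b)) (at x)"
    by (auto intro!: derivative_eq_intros)
  then show ?thesis
    by (rule has_field_derivative_transform_within_open[of _ _ _ "{-b<..}"])
      (use assms(2) in \<open>auto simp: fabc_right\<close>)
qed

lemma fabc_has_deriv_left: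
  assumes "strongly_hyperbolic f2" "x < -b"
  shows "(fabc f1 f2 a b c has_real_derivative a * deriv f2 (- x - b)) (at x)"
proof -
  have "((\<lambda>y. f2 (- y - b)) has_real_derivative deriv f2 (- x - b) * (- 1)) (at x)"
    using strongly_hyperbolic_has_deriv[OF assms(1), of "- x - b"] assms(2)
    by (intro DERIV_chain2[where g = "\<lambda>y. - y - b"]) (auto intro!: derivative_eq_intros)
  then have "((\<lambda>y. - a * f2 (- y - b) + c) has_real_derivative a * deriv f2 (- x - b)) (at x)"
    by (auto intro!: derivative_eq_intros)
  then show ?thesis
    by (rule has_field_derivative_transform_within_open[of _ _ _ "{..< -b}"])
      (use assms(2) in \<open>auto simp: fabc_left\<close>)
qed

lemma deriv_fabc_right:
  "strongly_hyperbolic f1 \<Longrightarrow> -b < x \<Longrightarrow> deriv (fabc f1 f2 a b c) x = a * deriv f1 (x + b)"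
  using fabc_has_deriv_right DERIV_imp_deriv by blast

lemma deriv_fabc_left:
  "strongly_hyperbolic f2 \<Longrightarrow> x < -b \<Longrightarrow> deriv (fabc f1 f2 a b c) x = a * deriv f2 (- x - b)"
  using fabc_has_deriv_left DERIV_imp_deriv by blast

lemma deriv_fabc_reflect:
  assumes "strongly_hyperbolic f1" "strongly_hyperbolic f2" "x \<noteq> b"
  shows "deriv (fabc f2 f1 a (- b) (- c)) x = deriv (fabc f1 f2 a b c) (- x)"
proof (cases "b < x")
  case True
  then show ?thesis
    using deriv_fabc_right[OF assms(2), of "- b" x] deriv_fabc_left[OF assms(2), of "- x" b] by simp
next
  case False
  then show ?thesis
    using assms(3) deriv_fabc_left[OF assms(1), of x "- b"] deriv_fabc_right[OF assms(1), of b "- x"]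
    by simp
qed

lemma fabc_right_gt:
  "strongly_hyperbolic f1 \<Longrightarrow> 0 < a \<Longrightarrow> -b < x \<Longrightarrow> c < fabc f1 f2 a b c x"
  using strongly_hyperbolic_pos[of f1 "x + b"] by (simp add: fabc_right)

lemma fabc_left_lt:
  "strongly_hyperbolic f2 \<Longrightarrow> 0 < a \<Longrightarrow> x < -b \<Longrightarrow> fabc f1 f2 a b c x < c"
  using strongly_hyperbolic_pos[of f2 "- x - b"] by (simp add: fabc_left)

lemma fabc_right_strict_decreasing:
  "strongly_hyperbolic f1 \<Longrightarrow> 0 < a \<Longrightarrow> -b < x \<Longrightarrow> x < y \<Longrightarrow>
    fabc f1 f2 a b c y < fabc f1 f2 a b c x"
  using strongly_hyperbolic_strict_decreasing[of f1 "x + b" "y + b"] by (simp add: fabc_right)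

lemma fabc_left_strict_decreasing:
  "strongly_hyperbolic f2 \<Longrightarrow> 0 < a \<Longrightarrow> x < y \<Longrightarrow> y < -b \<Longrightarrow>
    fabc f1 f2 a b c y < fabc f1 f2 a b c x"
  using strongly_hyperbolic_strict_decreasing[of f2 "- y - b" "- x - b"] by (simp add: fabc_left)

context
  fixes f1 f2 :: "real \<Rightarrow> real" and a :: real
  assumes sh1: "strongly_hyperbolic f1" and sh2: "strongly_hyperbolic f2" and a: "0 < a"
begin

lemma inj_on_fabc: "inj_on (fabc f1 f2 a b c) (- {-b})"
proof (rule linorder_inj_onI')
  fix x y
  assume "x \<in> - {-b}" "y \<in> - {-b}" "x < y"
  then consider "-b < x" | "y < -b" | "x < -b" "-b < y"
    by force
  then show "fabc f1 f2 a b c x \<noteq> fabc f1 f2 a b c y"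
  proof cases
    case 1
    then show ?thesis
      using fabc_right_strict_decreasing[OF sh1 a 1 \<open>x < y\<close>, of f2 c] by linarith
  next
    case 2
    then show ?thesis
      using fabc_left_strict_decreasing[OF sh2 a \<open>x < y\<close> 2, of f1 c] by linarith
  next
    case 3
    then show ?thesis
      using fabc_left_lt[OF sh2 a 3(1), of f1 c]
        fabc_right_gt[OF sh1 a 3(2), of c f2]
      by linarith
  qed
qed

lemma fabc_translate_ne:
  assumes "b1 \<noteq> b2" "x \<noteq> -b1" "x \<noteq> -b2"
  shows "fabc f1 f2 a b1 c x \<noteq> fabc f1 f2 a b2 c x"
proof
  assume "fabc f1 f2 a b1 c x = fabc f1 f2 a b2 c x"
  then have "fabc f1 f2 a b2 c (x + b1 - b2) = fabc f1 f2 a b2 c x"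
    by (simp flip: fabc_shift)
  then have "x + b1 - b2 = x"
    using inj_onD[OF inj_on_fabc] assms(2,3) by simp
  then show False
    using assms(1) by simp
qed

end

lemma graph_closure_Int:
  "graph_closure f1 f2 a1 b1 c1 \<inter> graph_closure f1 f2 a2 b2 c2 =
     (\<lambda>x. (Fin x, Fin (fabc f1 f2 a1 b1 c1 x))) `
       {x. x \<noteq> -b1 \<and> x \<noteq> -b2 \<and> fabc f1 f2 a1 b1 c1 x = fabc f1 f2 a2 b2 c2 x}
     \<union> (if b1 = b2 then {(Fin (-b1), Infty)} else {})
     \<union> (if c1 = c2 then {(Infty, Fin c1)} else {})"
  unfolding graph_closure_def by auto

lemma tangency_same_pole:
  assumes sh1: "strongly_hyperbolic f1" and sh2: "strongly_hyperbolic f2"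
    and tangent_value: "fabc f1 f2 a1 b1 c1 xp = fabc f1 f2 a2 b2 c2 xp"
    and tangent_deriv: "deriv (fabc f1 f2 a1 b1 c1) xp = deriv (fabc f1 f2 a2 b2 c2) xp"
    and b: "b1 = b2" and xp: "xp \<noteq> -b1"
  shows "a1 = a2 \<and> c1 = c2"
proof (cases "-b1 < xp")
  case True
  have "a1 * deriv f1 (xp + b1) = a2 * deriv f1 (xp + b1)" "deriv f1 (xp + b1) < 0"
    using tangent_deriv deriv_fabc_right[OF sh1] strongly_hyperbolic_deriv_neg[OF sh1] True b
    by auto
  then show ?thesis
    using tangent_value True b by (simp add: fabc_right)
next
  case False
  then have "xp < -b1"
    using xp by simp
  have "a1 * deriv f2 (- xp - b1) = a2 * deriv f2 (- xp - b1)" "deriv f2 (- xp - b1) < 0"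
    using tangent_deriv deriv_fabc_left[OF sh2] strongly_hyperbolic_deriv_neg[OF sh2]
      \<open>xp < -b1\<close> b by auto
  then show ?thesis
    using tangent_value \<open>xp < -b1\<close> b by (simp add: fabc_left)
qed

context
  fixes f1 f2 :: "real \<Rightarrow> real" and a1 a2 b1 b2 c1 c2 xp :: real
  assumes sh1: "strongly_hyperbolic f1" and sh2: "strongly_hyperbolic f2"
    and a1: "0 < a1" and a2: "0 < a2"
    and tangent_value: "fabc f1 f2 a1 b1 c1 xp = fabc f1 f2 a2 b2 c2 xp"
    and tangent_deriv: "deriv (fabc f1 f2 a1 b1 c1) xp = deriv (fabc f1 f2 a2 b2 c2) xp"
begin

lemma tangency_right_branches:
  assumes b: "b1 < b2" and xp: "-b1 < xp"
  shows "c2 < c1"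
    and "\<And>x. x \<noteq> -b1 \<Longrightarrow> x \<noteq> -b2 \<Longrightarrow> x \<noteq> xp \<Longrightarrow>
      fabc f1 f2 a1 b1 c1 x \<noteq> fabc f1 f2 a2 b2 c2 x"
proof -
  define d where "d = b2 - b1"
  define u0 where "u0 = xp + b1"
  have d: "0 < d" and u0: "0 < u0" and shift: "\<And>x. x + b2 = x + b1 + d"
    using b xp by (auto simp: d_def u0_def)
  have "-b2 < xp"
    using b xp by simp
  then have tangent: "a1 * deriv f1 u0 = a2 * deriv f1 (u0 + d)"
    using tangent_deriv deriv_fabc_right[OF sh1 xp] deriv_fabc_right[OF sh1, of b2 xp]
    by (simp add: u0_def shift)
  have value_u0: "a1 * f1 u0 - a2 * f1 (u0 + d) = c2 - c1"
    using tangent_value \<open>-b2 < xp\<close> xp by (simp add: fabc_right u0_def shift)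
  show "c2 < c1"
    using shifted_tangency_gap[OF sh1 a1 d u0 tangent] value_u0 by simp
  fix x
  assume x: "x \<noteq> -b1" "x \<noteq> -b2" "x \<noteq> xp"
  consider "-b1 < x" | "-b2 < x" "x < -b1" | "x < -b2"
    using x b by linarith
  then show "fabc f1 f2 a1 b1 c1 x \<noteq> fabc f1 f2 a2 b2 c2 x"
  proof cases
    case 1
    have "c2 - c1 < a1 * f1 (x + b1) - a2 * f1 (x + b1 + d)"
      using shifted_tangency_strict_min[OF sh1 a1 d u0 tangent, of "x + b1"] value_u0 1 x(3)
      by (simp add: u0_def)
    then show ?thesis
      using 1 b by (simp add: fabc_right shift)
  next
    case 2
    have "fabc f1 f2 a1 b1 c1 x < c1"
      using fabc_left_lt[OF sh2 a1 2(2)] .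
    also have "\<dots> < fabc f1 f2 a1 b1 c1 xp"
      using fabc_right_gt[OF sh1 a1 xp] .
    also have "\<dots> < fabc f1 f2 a2 b2 c2 x"
      unfolding tangent_value using fabc_right_strict_decreasing[OF sh1 a2 2(1)] 2 xp by simp
    finally show ?thesis
      by simp
  next
    case 3
    define s where "s = - x - b2"
    have s: "0 < s" "- x - b1 = s + d"
      using 3 by (auto simp: s_def d_def)
    have "a1 * f2 (s + d) < a1 * f2 s"
      using strongly_hyperbolic_strict_decreasing[OF sh2 s(1), of "s + d"] d a1 by simp
    also have "\<dots> < a2 * f2 s"
      using shifted_tangency_coeff_less[OF sh1 a1 d u0 tangent] strongly_hyperbolic_pos[OF sh2 s(1)]
      by simp
    finally have "fabc f1 f2 a2 b2 c2 x < fabc f1 f2 a1 b1 c1 x"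
      using \<open>c2 < c1\<close> 3 b by (simp add: fabc_left s(2) flip: s_def)
    then show ?thesis
      by simp
  qed
qed

lemma tangency_opposite_branches:
  assumes left: "-b2 < xp" and right: "xp < -b1"
  shows "c2 < c1"
    and "\<And>x. x \<noteq> -b1 \<Longrightarrow> x \<noteq> -b2 \<Longrightarrow> x \<noteq> xp \<Longrightarrow>
      fabc f1 f2 a1 b1 c1 x \<noteq> fabc f1 f2 a2 b2 c2 x"
proof -
  have below: "fabc f1 f2 a1 b1 c1 xp < c1"
    using fabc_left_lt[OF sh2 a1 right] .
  have above: "c2 < fabc f1 f2 a2 b2 c2 xp"
    using fabc_right_gt[OF sh1 a2 left] .
  show "c2 < c1"
    using below above tangent_value by simp
  fix x
  assume x: "x \<noteq> -b1" "x \<noteq> -b2" "x \<noteq> xp"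
  consider "-b1 < x" | "-b2 < x" "x < -b1" | "x < -b2"
    using x by linarith
  then show "fabc f1 f2 a1 b1 c1 x \<noteq> fabc f1 f2 a2 b2 c2 x"
  proof cases
    case 1
    have "fabc f1 f2 a2 b2 c2 x < fabc f1 f2 a2 b2 c2 xp"
      using fabc_right_strict_decreasing[OF sh1 a2 left] 1 right by simp
    also have "\<dots> < c1"
      using below tangent_value by simp
    also have "\<dots> < fabc f1 f2 a1 b1 c1 x"
      using fabc_right_gt[OF sh1 a1 1] .
    finally show ?thesis
      by simp
  next
    case 3
    have "fabc f1 f2 a2 b2 c2 x < c2"
      using fabc_left_lt[OF sh2 a2 3] .
    also have "\<dots> < fabc f1 f2 a1 b1 c1 xp"
      using above tangent_value by simp
    also have "\<dots> < fabc f1 f2 a1 b1 c1 x"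
      using fabc_left_strict_decreasing[OF sh2 a1 _ right] 3 left by simp
    finally show ?thesis
      by simp
  next
    case 2
    define H' where "H' y = a2 * deriv f1 (y + b2) - a1 * deriv f2 (- y - b1)" for y
    have H': "((\<lambda>y. fabc f1 f2 a2 b2 c2 y - fabc f1 f2 a1 b1 c1 y) has_real_derivative H' y) (at y)"
      if "-b2 < y" "y < -b1" for y
      unfolding H'_def using that
      by (intro DERIV_diff fabc_has_deriv_right[OF sh1] fabc_has_deriv_left[OF sh2])
    have H'_mono: "H' y < H' z" if "-b2 < y" "y < z" "z < -b1" for y z
    proof -
      have "a2 * deriv f1 (y + b2) < a2 * deriv f1 (z + b2)"
        using strongly_hyperbolic_deriv_strict_mono[OF sh1, of "y + b2" "z + b2"] a2 that by simp
      moreover have "a1 * deriv f2 (- z - b1) < a1 * deriv f2 (- y - b1)"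
        using strongly_hyperbolic_deriv_strict_mono[OF sh2, of "- z - b1" "- y - b1"] a1 that by simp
      ultimately show ?thesis
        unfolding H'_def by simp
    qed
    have "H' xp = 0"
      using tangent_deriv deriv_fabc_right[OF sh1 left] deriv_fabc_left[OF sh2 right]
      by (simp add: H'_def)
    have "fabc f1 f2 a2 b2 c2 xp - fabc f1 f2 a1 b1 c1 xp < fabc f1 f2 a2 b2 c2 x - fabc f1 f2 a1 b1 c1 x"
    proof (rule DERIV_sign_change_imp_strict_min[OF x(3), of _ H'])
      show "((\<lambda>y. fabc f1 f2 a2 b2 c2 y - fabc f1 f2 a1 b1 c1 y) has_real_derivative H' y) (at y)"
        if "min x xp \<le> y" "y \<le> max x xp" for y
        using H' that 2 left right by simp
    next
      show "H' y < 0" if "min x xp < y" "y < xp" for y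
        using H'_mono[of y xp] \<open>H' xp = 0\<close> that 2 right by auto
    next
      show "0 < H' y" if "xp < y" "y < max x xp" for y
        using H'_mono[of xp y] \<open>H' xp = 0\<close> that 2 left by auto
    qed
    then show ?thesis
      using tangent_value by simp
  qed
qed

end

lemma tangency_ordered_poles:
  assumes sh1: "strongly_hyperbolic f1" and sh2: "strongly_hyperbolic f2"
    and a1: "0 < a1" and a2: "0 < a2" and b: "b1 < b2"
    and xp: "xp \<noteq> -b1" "xp \<noteq> -b2"
    and tangent_value: "fabc f1 f2 a1 b1 c1 xp = fabc f1 f2 a2 b2 c2 xp"
    and tangent_deriv: "deriv (fabc f1 f2 a1 b1 c1) xp = deriv (fabc f1 f2 a2 b2 c2) xp"
  shows "c2 < c1 \<and> (\<forall>x. x \<noteq> -b1 \<longrightarrow> x \<noteq> -b2 \<longrightarrow> x \<noteq> xp \<longrightarrow>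
    fabc f1 f2 a1 b1 c1 x \<noteq> fabc f1 f2 a2 b2 c2 x)"
proof -
  note tangency = sh1 sh2 a1 a2 tangent_value tangent_deriv
  consider "-b1 < xp" | "-b2 < xp" "xp < -b1" | "xp < -b2"
    using xp by linarith
  then show ?thesis
  proof cases
    case 1
    then show ?thesis
      using tangency_right_branches[OF tangency b 1] by blast
  next
    case 2
    then show ?thesis
      using tangency_opposite_branches[OF tangency 2] by blast
  next
    case 3
    \<comment> \<open>reflect in the origin and exchange the graphs; then -xp lies on both right branches\<close>
    have reflected_value: "fabc f2 f1 a2 (- b2) (- c2) (- xp) = fabc f2 f1 a1 (- b1) (- c1) (- xp)"
      using tangent_value by (simp add: fabc_reflect)
    have reflected_deriv:
      "deriv (fabc f2 f1 a2 (- b2) (- c2)) (- xp) = deriv (fabc f2 f1 a1 (- b1) (- c1)) (- xp)"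
      using tangent_deriv xp by (simp add: deriv_fabc_reflect[OF sh1 sh2])
    have "- b2 < - b1" "- (- b2) < - xp"
      using b 3 by simp_all
    note reflected = tangency_right_branches[OF sh2 sh1 a2 a1 reflected_value reflected_deriv this]
    have "fabc f1 f2 a1 b1 c1 x \<noteq> fabc f1 f2 a2 b2 c2 x"
      if "x \<noteq> -b1" "x \<noteq> -b2" "x \<noteq> xp" for x
      using reflected(2)[of "- x"] that by (auto simp: fabc_reflect)
    then show ?thesis
      using reflected(1) by simp
  qed
qed

lemma tangency_coincidence:
  assumes sh1: "strongly_hyperbolic f1" and sh2: "strongly_hyperbolic f2"
    and a1: "0 < a1" and a2: "0 < a2" and ne: "(a1, b1, c1) \<noteq> (a2, b2, c2)"
    and xp: "xp \<noteq> -b1" "xp \<noteq> -b2"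
    and tangent_value: "fabc f1 f2 a1 b1 c1 xp = fabc f1 f2 a2 b2 c2 xp"
    and tangent_deriv: "deriv (fabc f1 f2 a1 b1 c1) xp = deriv (fabc f1 f2 a2 b2 c2) xp"
  shows "b1 \<noteq> b2" and "c1 \<noteq> c2"
    and "{x. x \<noteq> -b1 \<and> x \<noteq> -b2 \<and> fabc f1 f2 a1 b1 c1 x = fabc f1 f2 a2 b2 c2 x} = {xp}"
proof -
  show "b1 \<noteq> b2"
    using tangency_same_pole[OF sh1 sh2 tangent_value tangent_deriv _ xp(1)] ne by auto
  then consider "b1 < b2" | "b2 < b1"
    by linarith
  then have "c1 \<noteq> c2 \<and> (\<forall>x. x \<noteq> -b1 \<longrightarrow> x \<noteq> -b2 \<longrightarrow> x \<noteq> xp \<longrightarrow>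
    fabc f1 f2 a1 b1 c1 x \<noteq> fabc f1 f2 a2 b2 c2 x)"
  proof cases
    case 1
    then show ?thesis
      using tangency_ordered_poles[OF sh1 sh2 a1 a2 1 xp tangent_value tangent_deriv] by simp
  next
    case 2
    then show ?thesis
      using tangency_ordered_poles[OF sh1 sh2 a2 a1 2 xp(2,1) tangent_value[symmetric] tangent_deriv[symmetric]]
      by auto
  qed
  then show "c1 \<noteq> c2" "{x. x \<noteq> -b1 \<and> x \<noteq> -b2 \<and> fabc f1 f2 a1 b1 c1 x = fabc f1 f2 a2 b2 c2 x} = {xp}"
    using xp tangent_value by auto
qed

theorem lemma4p9:
  fixes f1 f2 :: "real \<Rightarrow> real" and a1 a2 b1 b2 c1 c2 :: real and p :: "circ \<times> circ"
  assumes "strongly_hyperbolic f1" and "strongly_hyperbolic f2"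
    and "a1 > 0" and "a2 > 0"
    and "(a1, b1, c1) \<noteq> (a2, b2, c2)"
    and "(\<exists>b. p = (Fin b, Infty) \<and> a1 = a2 \<and> b1 = -b \<and> b2 = -b \<and> c1 \<noteq> c2)
       \<or> (\<exists>c. p = (Infty, Fin c) \<and> a1 = a2 \<and> b1 \<noteq> b2 \<and> c1 = c \<and> c2 = c)
       \<or> (\<exists>xp yp. p = (Fin xp, Fin yp) \<and> xp \<noteq> -b1 \<and> xp \<noteq> -b2 \<and>
            fabc f1 f2 a1 b1 c1 xp = yp \<and> fabc f1 f2 a2 b2 c2 xp = yp \<and>
            deriv (fabc f1 f2 a1 b1 c1) xp = deriv (fabc f1 f2 a2 b2 c2) xp)"
  shows "graph_closure f1 f2 a1 b1 c1 \<inter> graph_closure f1 f2 a2 b2 c2 = {p}"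
  using assms(6)
proof (elim disjE exE conjE)
  fix b
  assume "p = (Fin b, Infty)" "a1 = a2" "b1 = -b" "b2 = -b" "c1 \<noteq> c2"
  moreover have "fabc f1 f2 a1 b1 c1 x \<noteq> fabc f1 f2 a1 b1 c2 x" if "x \<noteq> -b1" for x
    using fabc_add_const[OF that, of f1 f2 a1 c2 c1] \<open>c1 \<noteq> c2\<close> by simp
  ultimately show ?thesis
    unfolding graph_closure_Int by auto
next
  fix c
  assume "p = (Infty, Fin c)" "a1 = a2" "b1 \<noteq> b2" "c1 = c" "c2 = c"
  moreover have "fabc f1 f2 a1 b1 c x \<noteq> fabc f1 f2 a1 b2 c x" if "x \<noteq> -b1" "x \<noteq> -b2" for x
    using fabc_translate_ne[OF assms(1-3) \<open>b1 \<noteq> b2\<close> that] .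
  ultimately show ?thesis
    unfolding graph_closure_Int by auto
next
  fix xp yp
  assume p: "p = (Fin xp, Fin yp)" and xp: "xp \<noteq> -b1" "xp \<noteq> -b2"
    and "fabc f1 f2 a1 b1 c1 xp = yp" "fabc f1 f2 a2 b2 c2 xp = yp"
    and tangent_deriv: "deriv (fabc f1 f2 a1 b1 c1) xp = deriv (fabc f1 f2 a2 b2 c2) xp"
  then have tangent_value: "fabc f1 f2 a1 b1 c1 xp = fabc f1 f2 a2 b2 c2 xp"
    by simp
  note coincidence = tangency_coincidence[OF assms(1-5) xp tangent_value tangent_deriv]
  show ?thesis
    unfolding graph_closure_Int coincidence using coincidence(1,2) p \<open>fabc f1 f2 a1 b1 c1 xp = yp\<close>
    by simp
qed

end
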